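(* Let $f:\mathbb{R}^n\times\mathbb{R}\to\mathbb{R}^n$ be $C^1$, let $\lambda_-<\lambda_+$, let $\Lambda$ be a parameter shift from $\lambda_-$ to $\lambda_+$, and let $r>0$. Let $\Phi$ be the solution cocycle of $\dot x=f(x,\Lambda(rt))$ and $\phi_-$ the flow of $\dot x=f(x,\lambda_-)$. Assume $A_-$ is an asymptotically stable attractor for $\phi_-$. Then there is $\tilde\eta>0$ such that for all $\eta\in(0,\tilde\eta]$ and all $\delta>0$ there exist $\tau>0$ and $\tilde\tau>0$ such that $$\Phi(t,s,\mathcal{N}_\eta(A_-))\subset\mathcal{N}_\delta(A_-)$$ for all $t,s$ with $s<t-\tilde\tau$ and $t<-\tau$.
   Context: A parameter shift from $\lambda_-$ to $\lambda_+$ is a smooth $\Lambda:\mathbb{R}\to(\lambda_-,\lambda_+)$ with $\lim_{\tau\to\pm\infty}\Lambda(\tau)=\lambda_\pm$ and $\lim_{\tau\to\pm\infty}\Lambda'(\tau)=0$. Solutions are assumed to exist for all time; $\Phi(t,s,x_0)$ is the value at time $t$ of the solution with $x(s)=x_0$. For nonempty compact $X,Y$, $d(X,Y)=\sup_{x\in X}\inf_{y\in Y}\|x-y\|$ and $\mathcal{N}_\eta(M)=\{x: d(x,M)<\eta\}$. A compact $\phi_-$-invariant set $M$ is asymptotically stable if (i) for every $\epsilon>0$ there is $\delta>0$ with $d(\phi_-(t,y),M)<\epsilon$ for all $t>0$, $y\in\mathcal{N}_\delta(M)$, and (ii) there is $\eta>0$ with $\lim_{t\to\infty}d(\phi_-(t,y),M)=0$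 for all $y\in\mathcal{N}_\eta(M)$. *)

theory Defs
  imports "HOL-Analysis.Analysis"
begin

definition C1_map :: "('a::real_normed_vector \<Rightarrow> 'b::real_normed_vector) \<Rightarrow> bool" where
  "C1_map f \<longleftrightarrow> (\<exists>f' :: 'a \<Rightarrow> 'a \<Rightarrow>\<^sub>L 'b.
      (\<forall>z. (f has_derivative blinfun_apply (f' z)) (at z)) \<and> continuous_on UNIV f')"

definition smooth_real :: "(real \<Rightarrow> real) \<Rightarrow> bool" where
  "smooth_real g \<longleftrightarrow> (\<forall>k x. ((deriv ^^ k) g) differentiable (at x))"

definition parameter_shift :: "(real \<Rightarrow> real) \<Rightarrow> real \<Rightarrow> real \<Rightarrow> bool" where
  "parameter_shift \<Lambda> lm lp \<longleftrightarrow>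
     smooth_real \<Lambda> \<and> (\<forall>\<tau>. \<Lambda> \<tau> \<in> {lm<..<lp}) \<and>
     (\<Lambda> \<longlongrightarrow> lm) at_bot \<and> (\<Lambda> \<longlongrightarrow> lp) at_top \<and>
     (deriv \<Lambda> \<longlongrightarrow> 0) at_bot \<and> (deriv \<Lambda> \<longlongrightarrow> 0) at_top"

definition semidist :: "'a::metric_space set \<Rightarrow> 'a set \<Rightarrow> real" where
  "semidist X Y = (SUP x\<in>X. infdist x Y)"

definition nbhd :: "real \<Rightarrow> 'a::metric_space set \<Rightarrow> 'a set" where
  "nbhd \<eta> M = {x. semidist {x} M < \<eta>}"

definition is_solution_cocycle :: "(real \<Rightarrow> 'a \<Rightarrow> 'a::real_normed_vector) \<Rightarrow> (real \<Rightarrow> real \<Rightarrow> 'a \<Rightarrow> 'a) \<Rightarrow> bool" where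
  "is_solution_cocycle g \<Phi> \<longleftrightarrow> (\<forall>s x0. \<Phi> s s x0 = x0 \<and>
      (\<forall>t. ((\<lambda>t. \<Phi> t s x0) has_vector_derivative g t (\<Phi> t s x0)) (at t)))"

definition is_flow :: "('a::real_normed_vector \<Rightarrow> 'a) \<Rightarrow> (real \<Rightarrow> 'a \<Rightarrow> 'a) \<Rightarrow> bool" where
  "is_flow h \<phi> \<longleftrightarrow> (\<forall>y. \<phi> 0 y = y \<and>
      (\<forall>t. ((\<lambda>t. \<phi> t y) has_vector_derivative h (\<phi> t y)) (at t)))"

definition asymptotically_stable :: "(real \<Rightarrow> 'a::metric_space \<Rightarrow> 'a) \<Rightarrow> 'a set \<Rightarrow> bool" where
  "asymptotically_stable \<phi> M \<longleftrightarrow>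
     M \<noteq> {} \<and> compact M \<and> (\<forall>t. \<phi> t ` M = M) \<and>
     (\<forall>\<epsilon>>0. \<exists>\<delta>>0. \<forall>t>0. \<forall>y\<in>nbhd \<delta> M. semidist {\<phi> t y} M < \<epsilon>) \<and>
     (\<exists>\<eta>>0. \<forall>y\<in>nbhd \<eta> M. ((\<lambda>t. semidist {\<phi> t y} M) \<longlongrightarrow> 0) at_top)"

end

(*
  For t far in the past, \<Lambda>(r t) is close to \<lambda>_-, so on time windows of a fixed length T the
  solutions of x' = f(x, \<Lambda>(r t)) stay close to those of the frozen flow \<phi>_- (a Gronwall
  estimate). Let K be a closed neighbourhood of A_- inside its basin. Attraction is uniform
  on K, so T can be chosen such that \<phi>_- moves K into a small neighbourhood of A_- that lies
  in K again. Hence over each window a solution starting in K ends close to A_-, and the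
  argument can be iterated along the grid s, s + T, s + 2T, ...; on the last, incomplete
  window stability of A_- keeps the solution close.
*)
theory Submission
  imports Defs
begin

lemma has_vector_derivative_imp_quotient_tendsto:
  fixes D :: "real \<Rightarrow> 'a::real_normed_vector"
  assumes "(D has_vector_derivative D') (at t)"
  shows "((\<lambda>u. (D u - D t) /\<^sub>R (u - t)) \<longlongrightarrow> D') (at t)"
proof -
  have "((\<lambda>u. norm (D u - D t - (u - t) *\<^sub>R D') / norm (u - t)) \<longlongrightarrow> 0) (at t)"
    using assms unfolding has_vector_derivative_def has_derivative_iff_norm by blast
  then have "((\<lambda>u. norm ((D u - D t) /\<^sub>R (u - t) - D')) \<longlongrightarrow> 0) (at t)"
  proof (rule Lim_transform_eventually)
    have "norm (D u - D t - (u - t) *\<^sub>R D') / norm (u - t) = norm ((D u - D t) /\<^sub>R (u - t) - D')"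
      if "u \<noteq> t" for u
    proof -
      have "D u - D t - (u - t) *\<^sub>R D' = (u - t) *\<^sub>R ((D u - D t) /\<^sub>R (u - t) - D')"
        using that by (simp add: scaleR_diff_right)
      then show ?thesis using that by simp
    qed
    then show "\<forall>\<^sub>F u in at t. norm (D u - D t - (u - t) *\<^sub>R D') / norm (u - t) = norm ((D u - D t) /\<^sub>R (u - t) - D')"
      unfolding eventually_at_filter by (intro always_eventually) blast
  qed
  then show ?thesis by (simp add: tendsto_norm_zero_iff LIM_zero_iff)
qed

lemma eventually_at_left_norm_gt:
  fixes D :: "real \<Rightarrow> 'a::real_normed_vector"
  assumes dD: "(D has_vector_derivative D') (at t)"
    and dB: "(B has_real_derivative B') (at t)"
    and "norm D' < B'" and "B t \<le> norm (D t)"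
  shows "\<forall>\<^sub>F u in at_left t. B u < norm (D u)"
proof -
  have "((\<lambda>u. (B u - B t) / (u - t)) \<longlongrightarrow> B') (at t)"
    using dB by (simp add: has_field_derivative_iff)
  moreover have "((\<lambda>u. norm ((D u - D t) /\<^sub>R (u - t))) \<longlongrightarrow> norm D') (at t)"
    by (intro tendsto_norm has_vector_derivative_imp_quotient_tendsto dD)
  ultimately have "((\<lambda>u. (B u - B t) / (u - t) - norm ((D u - D t) /\<^sub>R (u - t))) \<longlongrightarrow> B' - norm D') (at t)"
    by (rule tendsto_diff)
  then have "\<forall>\<^sub>F u in at t. 0 < (B u - B t) / (u - t) - norm ((D u - D t) /\<^sub>R (u - t))"
    by (rule order_tendstoD(1)) (use assms(3) in simp)
  then have "\<forall>\<^sub>F u in at_left t. 0 < (B u - B t) / (u - t) - norm ((D u - D t) /\<^sub>R (u - t))"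
    by (simp add: eventually_at_split)
  moreover have "\<forall>\<^sub>F u in at_left t. u < t"
    by (simp add: eventually_at_filter)
  ultimately show ?thesis
  proof eventually_elim
    case (elim u)
    have "(B u - B t) / (u - t) - norm ((D u - D t) /\<^sub>R (u - t)) = (B t - B u - norm (D u - D t)) / (t - u)"
      using \<open>u < t\<close> by (simp add: divide_simps) (simp add: algebra_simps)
    with elim have "0 < (B t - B u - norm (D u - D t)) / (t - u)"
      by linarith
    then have "norm (D u - D t) < B t - B u"
      using \<open>u < t\<close> by (simp add: zero_less_divide_iff)
    moreover have "norm (D t) \<le> norm (D u) + norm (D t - D u)"
      by (rule norm_triangle_sub)
    ultimately show ?case using assms(4) by (simp add: norm_minus_commute)
  qed
qed

lemma negative_if_no_first_zero:
  fixes h :: "real \<Rightarrow> real"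
  assumes cont: "continuous_on {a..b} h" and "h a < 0"
    and no_first_zero: "\<And>t. t \<in> {a<..b} \<Longrightarrow> h t = 0 \<Longrightarrow> \<forall>u\<in>{a..<t}. h u < 0 \<Longrightarrow> False"
    and t: "t \<in> {a..b}"
  shows "h t < 0"
proof (rule ccontr)
  assume "\<not> h t < 0"
  define S where "S = {a..b} \<inter> h -` {0..}"
  have "t \<in> S" using t \<open>\<not> h t < 0\<close> by (simp add: S_def)
  moreover have "closed S"
    unfolding S_def by (intro continuous_closed_preimage cont) auto
  moreover have "bdd_below S" by (auto simp: S_def)
  ultimately have t1: "Inf S \<in> S" by (intro closed_contains_Inf) auto
  have below: "h u < 0" if "a \<le> u" "u < Inf S" for u
  proof -
    have "u \<notin> S" using cInf_lower[OF _ \<open>bdd_below S\<close>, of u] that(2) by linarith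
    moreover have "u \<le> b" using t1 that(2) by (simp add: S_def)
    ultimately show ?thesis using that(1) by (simp add: S_def)
  qed
  have "a < Inf S" using t1 \<open>h a < 0\<close> by (force simp: S_def less_eq_real_def)
  have "h (Inf S) = 0"
  proof (rule ccontr)
    assume "h (Inf S) \<noteq> 0"
    with t1 have "h a \<le> 0" "0 \<le> h (Inf S)" using \<open>h a < 0\<close> by (auto simp: S_def)
    then obtain u where "a \<le> u" "u \<le> Inf S" "h u = 0"
      using IVT'[of h a 0 "Inf S"] t1 continuous_on_subset[OF cont] by (auto simp: S_def)
    moreover from this \<open>h (Inf S) \<noteq> 0\<close> have "u \<noteq> Inf S" by auto
    ultimately show False using below[of u] by simp
  qed
  with no_first_zero[of "Inf S"] t1 below \<open>a < Inf S\<close> show False by (auto simp: S_def)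
qed

text \<open>The exponent L + 2 rather than L leaves room to absorb the perturbation e \<le> C, which
  keeps the comparison strict; strictness is what the first-crossing argument needs.\<close>
lemma norm_lt_exp_barrier:
  fixes D :: "real \<Rightarrow> 'a::real_normed_vector"
  assumes "0 \<le> L" and "e \<le> C"
    and deriv: "\<And>t. t \<in> {a..b} \<Longrightarrow> (D has_vector_derivative D' t) (at t)"
    and growth: "\<And>t. t \<in> {a..b} \<Longrightarrow> norm (D t) \<le> \<rho> \<Longrightarrow> norm (D' t) \<le> L * norm (D t) + e"
    and init: "norm (D a) < C" and final: "C * exp ((L + 2) * (b - a)) \<le> \<rho>"
    and t: "t \<in> {a..b}"
  shows "norm (D t) < C * exp ((L + 2) * (t - a))"
proof -
  define B where "B t = C * exp ((L + 2) * (t - a))" for t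
  have dB: "(B has_real_derivative (L + 2) * B t) (at t)" for t
    unfolding B_def by (auto intro!: derivative_eq_intros)
  have "continuous_on {a..b} D"
    using deriv by (meson continuous_at_imp_continuous_on has_vector_derivative_continuous)
  then have cont: "continuous_on {a..b} (\<lambda>t. norm (D t) - B t)"
    unfolding B_def by (intro continuous_intros)
  have "norm (D t) - B t < 0"
  proof (rule negative_if_no_first_zero[OF cont _ _ t])
    show "norm (D a) - B a < 0" using init by (simp add: B_def)
    fix t1 assume t1: "t1 \<in> {a<..b}" "norm (D t1) - B t1 = 0" and below: "\<forall>u\<in>{a..<t1}. norm (D u) - B u < 0"
    have "0 < C" using init by (meson norm_ge_zero le_less_trans)
    have "C \<le> B t1"
      unfolding B_def using t1(1) \<open>0 \<le> L\<close> \<open>0 < C\<close> by (simp add: mult_le_cancel_left1)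
    have "B t1 \<le> C * exp ((L + 2) * (b - a))"
      unfolding B_def using t1(1) \<open>0 \<le> L\<close> \<open>0 < C\<close> by (intro mult_left_mono) (auto intro: mult_left_mono)
    then have "norm (D' t1) \<le> L * B t1 + e"
      using growth[of t1] t1 final by simp
    also have "\<dots> < (L + 2) * B t1"
      using \<open>C \<le> B t1\<close> \<open>e \<le> C\<close> \<open>0 < C\<close> by (simp add: distrib_right)
    finally have "\<forall>\<^sub>F u in at_left t1. B u < norm (D u)"
      using t1 by (intro eventually_at_left_norm_gt[OF deriv dB]) auto
    moreover have "\<forall>\<^sub>F u in at_left t1. u \<in> {a<..<t1}"
      using t1(1) by (intro eventually_at_left_real) simp
    ultimately have "\<forall>\<^sub>F u in at_left t1. False"
    proof eventually_elim
      case (elim u)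
      then have "norm (D u) - B u < 0" using below by simp
      with elim(1) show False by simp
    qed
    then show False by (simp add: trivial_limit_at_left_real)
  qed
  then show ?thesis by (simp add: B_def)
qed

lemma compact_uniform_threshold:
  fixes K :: "'a::metric_space set" and P :: "real \<Rightarrow> 'a \<Rightarrow> bool"
  assumes K: "compact K"
    and locally: "\<And>y. y \<in> K \<Longrightarrow> \<exists>\<nu>>0. \<exists>c. \<forall>z\<in>K. dist z y < \<nu> \<longrightarrow> P c z"
    and mono: "\<And>c c' z. c \<le> c' \<Longrightarrow> P c z \<Longrightarrow> P c' z"
  shows "\<exists>c. \<forall>z\<in>K. P c z"
proof -
  obtain \<nu> c where \<nu>: "\<And>y. y \<in> K \<Longrightarrow> \<nu> y > 0 \<and> (\<forall>z\<in>K. dist z y < \<nu> y \<longrightarrow> P (c y) z)"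
    using locally by metis
  have "K \<subseteq> (\<Union>y\<in>K. ball y (\<nu> y))" using \<nu> by (auto simp: dist_commute)
  then obtain F where F: "F \<subseteq> K" "finite F" "K \<subseteq> (\<Union>y\<in>F. ball y (\<nu> y))"
    using compactE_image[OF K, of K "\<lambda>y. ball y (\<nu> y)"] by blast
  show ?thesis
  proof (intro exI ballI)
    fix z assume z: "z \<in> K"
    then obtain y where y: "y \<in> F" "z \<in> ball y (\<nu> y)" using F(3) by blast
    then have "P (c y) z" using \<nu>[of y] F(1) z by (auto simp: dist_commute)
    moreover have "c y \<le> Max (c ` F)" using F(2) y(1) by simp
    ultimately show "P (Max (c ` F)) z" using mono by blast
  qed
qed

lemma C1_map_imp_continuous: "C1_map f \<Longrightarrow> continuous_on UNIV f"
  unfolding C1_map_def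
  by (meson continuous_at_imp_continuous_on has_derivative_continuous)

lemma C1_map_slice_lipschitz_on_cball:
  fixes f :: "'a::euclidean_space \<times> real \<Rightarrow> 'b::real_normed_vector"
  assumes "C1_map f"
  shows "\<exists>L. L-lipschitz_on (cball 0 R) (\<lambda>p. f (p, c))"
proof -
  obtain f' :: "'a \<times> real \<Rightarrow> ('a \<times> real) \<Rightarrow>\<^sub>L 'b"
    where f': "\<And>z. (f has_derivative blinfun_apply (f' z)) (at z)" "continuous_on UNIV f'"
    using assms unfolding C1_map_def by blast
  have "bounded (f' ` (cball 0 R \<times> {c}))"
    by (intro compact_imp_bounded compact_continuous_image continuous_on_subset[OF f'(2)] compact_Times) auto
  then obtain M where "\<forall>z\<in>f' ` (cball 0 R \<times> {c}). norm z \<le> M"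
    unfolding bounded_iff by blast
  then have M: "norm (f' (p, c)) \<le> M" if "p \<in> cball 0 R" for p
    using that by auto
  have deriv: "((\<lambda>p. f (p, c)) has_derivative (\<lambda>v. f' (p, c) (v, 0))) (at p within cball 0 R)" for p
  proof -
    have "((\<lambda>p. (p, c)) has_derivative (\<lambda>v. (v, 0))) (at p within cball 0 R)"
      by (auto intro!: derivative_eq_intros)
    from has_derivative_compose[OF this f'(1)] show ?thesis by simp
  qed
  have "onorm (\<lambda>v. f' (p, c) (v, 0)) \<le> max M 0" if "p \<in> cball 0 R" for p
  proof (rule onorm_le)
    fix v :: 'a
    have "norm (f' (p, c) (v, 0)) \<le> norm (f' (p, c)) * norm (v, 0::real)" by (rule norm_blinfun)
    also have "\<dots> \<le> max M 0 * norm v" using M[OF that] by (simp add: norm_Pair mult_right_mono)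
    finally show "norm (f' (p, c) (v, 0)) \<le> max M 0 * norm v" .
  qed
  then have "norm (f (p, c) - f (q, c)) \<le> max M 0 * norm (p - q)"
    if "p \<in> cball 0 R" "q \<in> cball 0 R" for p q
    using differentiable_bound[OF convex_cball deriv _ that] by blast
  then have "(max M 0)-lipschitz_on (cball 0 R) (\<lambda>p. f (p, c))"
    by (intro lipschitz_onI) (simp_all add: dist_norm)
  then show ?thesis ..
qed

locale lipschitz_flow =
  fixes g :: "'a::real_normed_vector \<Rightarrow> 'a" and \<phi> :: "real \<Rightarrow> 'a \<Rightarrow> 'a"
  assumes flow: "is_flow g \<phi>"
    and lipschitz_on_cball: "\<And>R. \<exists>L. L-lipschitz_on (cball 0 R) g"
begin

lemma flow_zero [simp]: "\<phi> 0 y = y"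
  using flow unfolding is_flow_def by blast

lemma flow_has_vector_derivative: "((\<lambda>t. \<phi> t y) has_vector_derivative g (\<phi> t y)) (at t)"
  using flow unfolding is_flow_def by blast

lemma flow_shift_has_vector_derivative:
  "((\<lambda>v. \<phi> (v - a) y) has_vector_derivative g (\<phi> (v - a) y)) (at v)"
proof -
  have "((\<lambda>v. v - a) has_vector_derivative 1) (at v)"
    by (auto intro!: derivative_eq_intros)
  from vector_diff_chain_at[OF this flow_has_vector_derivative] show ?thesis
    by (simp add: o_def)
qed

lemma flow_trajectory_bounded: "\<exists>R. \<forall>t\<in>{a..b}. norm (\<phi> t y) \<le> R"
proof -
  have "continuous_on {a..b} (\<lambda>t. \<phi> t y)"
    by (intro continuous_at_imp_continuous_on ballI)
      (rule has_vector_derivative_continuous[OF flow_has_vector_derivative])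
  then have "bounded ((\<lambda>t. \<phi> t y) ` {a..b})"
    by (intro compact_imp_bounded compact_continuous_image) auto
  then obtain R where "\<forall>z\<in>(\<lambda>t. \<phi> t y) ` {a..b}. norm z \<le> R"
    unfolding bounded_iff by blast
  then show ?thesis by auto
qed

lemma flow_tracking:
  assumes L: "L-lipschitz_on (cball 0 (R + 1)) g"
    and R: "\<forall>t\<in>{0..T}. norm (\<phi> t y) \<le> R"
    and X: "\<forall>v. (X has_vector_derivative F v (X v)) (at v)"
    and F: "\<forall>v\<in>{a..a+T}. \<forall>p\<in>cball 0 (R + 1). norm (F v p - g p) \<le> \<nu>"
    and init: "norm (X a - y) < \<nu>"
    and \<nu>: "\<nu> \<le> min \<gamma> 1 * exp (- ((L + 2) * T))"
    and u: "u \<in> {a..a+T}"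
  shows "norm (X u - \<phi> (u - a) y) < \<gamma>"
proof -
  have "0 \<le> L" using L by (rule lipschitz_on_nonneg)
  have "0 < \<nu>" using init by (meson norm_ge_zero le_less_trans)
  have \<nu>_exp: "\<nu> * exp ((L + 2) * t) \<le> min \<gamma> 1" if "t \<le> T" for t
  proof -
    have "exp (- ((L + 2) * T)) * exp ((L + 2) * t) \<le> 1"
      using that \<open>0 \<le> L\<close> by (simp add: mult_exp_exp mult_left_mono)
    moreover have "0 < min \<gamma> 1 * exp (- ((L + 2) * T))"
      using \<open>0 < \<nu>\<close> \<nu> by linarith
    then have "0 < min \<gamma> 1" by (simp add: zero_less_mult_iff)
    ultimately have "min \<gamma> 1 * (exp (- ((L + 2) * T)) * exp ((L + 2) * t)) \<le> min \<gamma> 1"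
      by (intro mult_left_le) auto
    then show ?thesis
      using \<nu> by (metis exp_ge_zero mult.assoc mult_right_mono order_trans)
  qed
  have "norm (X u - \<phi> (u - a) y) < \<nu> * exp ((L + 2) * (u - a))"
  proof (rule norm_lt_exp_barrier[where D' = "\<lambda>v. F v (X v) - g (\<phi> (v - a) y)" and \<rho> = 1])
    fix v assume v: "v \<in> {a..a+T}" and close: "norm (X v - \<phi> (v - a) y) \<le> 1"
    have "norm (\<phi> (v - a) y) \<le> R" using R v by auto
    moreover from this close have "norm (X v) \<le> R + 1"
      using norm_triangle_sub[of "X v" "\<phi> (v - a) y"] by linarith
    ultimately have "norm (g (X v) - g (\<phi> (v - a) y)) \<le> L * norm (X v - \<phi> (v - a) y)"
      by (intro lipschitz_on_normD[OF L]) auto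
    moreover have "norm (F v (X v) - g (X v)) \<le> \<nu>"
      using F v \<open>norm (X v) \<le> R + 1\<close> by auto
    ultimately show "norm (F v (X v) - g (\<phi> (v - a) y)) \<le> L * norm (X v - \<phi> (v - a) y) + \<nu>"
      using norm_triangle_ineq[of "F v (X v) - g (X v)" "g (X v) - g (\<phi> (v - a) y)"] by simp
  next
    show "\<nu> * exp ((L + 2) * (a + T - a)) \<le> 1" using \<nu>_exp[of T] by simp
  next
    fix v
    show "((\<lambda>v. X v - \<phi> (v - a) y) has_vector_derivative F v (X v) - g (\<phi> (v - a) y)) (at v)"
      using X by (intro has_vector_derivative_diff flow_shift_has_vector_derivative) blast
  qed (use init u \<open>0 \<le> L\<close> \<open>0 < \<nu>\<close> in auto)
  also have "\<dots> \<le> \<gamma>" using \<nu>_exp[of "u - a"] u by simp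
  finally show ?thesis .
qed

lemma flow_continuous_dependence:
  assumes "0 < \<gamma>"
  shows "\<exists>\<nu>>0. \<forall>z. norm (z - y) < \<nu> \<longrightarrow> (\<forall>t\<in>{0..T}. norm (\<phi> t z - \<phi> t y) < \<gamma>)"
proof -
  obtain R where R: "\<forall>t\<in>{0..T}. norm (\<phi> t y) \<le> R"
    using flow_trajectory_bounded by blast
  obtain L where L: "L-lipschitz_on (cball 0 (R + 1)) g"
    using lipschitz_on_cball by blast
  define \<nu> where "\<nu> = min \<gamma> 1 * exp (- ((L + 2) * T))"
  have "norm (\<phi> t z - \<phi> t y) < \<gamma>" if "norm (z - y) < \<nu>" "t \<in> {0..T}" for z t
    using flow_tracking[OF L R, of "\<lambda>t. \<phi> t z" "\<lambda>v. g" 0 \<nu> \<gamma> t] that assms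
    by (simp add: flow_has_vector_derivative \<nu>_def)
  moreover have "0 < \<nu>" using assms by (simp add: \<nu>_def)
  ultimately show ?thesis by blast
qed

lemma flow_semigroup:
  assumes "0 \<le> t"
  shows "\<phi> t (\<phi> s y) = \<phi> (s + t) y"
proof (rule ccontr)
  define gap where "gap = norm (\<phi> (s + t) y - \<phi> t (\<phi> s y))"
  assume "\<phi> t (\<phi> s y) \<noteq> \<phi> (s + t) y"
  then have "0 < gap" by (simp add: gap_def)
  obtain R where R: "\<forall>u\<in>{0..t}. norm (\<phi> u (\<phi> s y)) \<le> R"
    using flow_trajectory_bounded by blast
  obtain L where L: "L-lipschitz_on (cball 0 (R + 1)) g"
    using lipschitz_on_cball by blast
  have "gap < gap"
    unfolding gap_def
    using flow_tracking[OF L R, of "\<lambda>u. \<phi> u y" "\<lambda>v. g" s "min gap 1 * exp (- ((L + 2) * t))" gap "s + t"]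
      \<open>0 < gap\<close> assms
    by (simp add: flow_has_vector_derivative gap_def)
  then show False by simp
qed

lemma flow_bounded_on_compact:
  assumes "compact K"
  shows "\<exists>R. \<forall>z\<in>K. \<forall>t\<in>{0..T}. norm (\<phi> t z) \<le> R"
proof (rule compact_uniform_threshold[OF \<open>compact K\<close>])
  fix y
  obtain R where R: "\<forall>t\<in>{0..T}. norm (\<phi> t y) \<le> R"
    using flow_trajectory_bounded by blast
  obtain \<nu> where "0 < \<nu>" and \<nu>: "\<And>z t. norm (z - y) < \<nu> \<Longrightarrow> t \<in> {0..T} \<Longrightarrow> norm (\<phi> t z - \<phi> t y) < 1"
    using flow_continuous_dependence[of 1 y T] by auto
  have "norm (\<phi> t z) \<le> R + 1" if "dist z y < \<nu>" "t \<in> {0..T}" for z t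
    using \<nu>[of z t] R that norm_triangle_sub[of "\<phi> t z" "\<phi> t y"] by (force simp: dist_norm)
  with \<open>0 < \<nu>\<close> show "\<exists>\<nu>>0. \<exists>c. \<forall>z\<in>K. dist z y < \<nu> \<longrightarrow> (\<forall>t\<in>{0..T}. norm (\<phi> t z) \<le> c)"
    by blast
qed (use order_trans in blast)

end

lemma semidist_singleton: "semidist {x} M = infdist x M"
  by (simp add: semidist_def)

lemma nbhd_eq_infdist: "nbhd \<eta> M = {x. infdist x M < \<eta>}"
  by (simp add: nbhd_def semidist_singleton)

lemma compact_infdist_le:
  fixes A :: "'a::heine_borel set"
  assumes "compact A" and "A \<noteq> {}"
  shows "compact {x. infdist x A \<le> c}"
proof -
  obtain a where "a \<in> A" using assms(2) by blast
  have "{x. infdist x A \<le> c} \<subseteq> cball a (c + diameter A)"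
  proof
    fix x assume "x \<in> {x. infdist x A \<le> c}"
    moreover obtain b where "b \<in> A" "infdist x A = dist x b"
      using infdist_attains_inf[OF compact_imp_closed[OF assms(1)] assms(2)] by blast
    moreover have "dist b a \<le> diameter A"
      using compact_imp_bounded[OF assms(1)] \<open>b \<in> A\<close> \<open>a \<in> A\<close> by (rule diameter_bounded_bound)
    ultimately show "x \<in> cball a (c + diameter A)"
      using dist_triangle[of x a b] by (simp add: dist_commute)
  qed
  then have "bounded {x. infdist x A \<le> c}"
    by (rule bounded_subset[OF bounded_cball])
  moreover have "closed {x. infdist x A \<le> c}"
    by (intro closed_Collect_le continuous_intros)
  ultimately show ?thesis by (simp add: compact_eq_bounded_closed)
qed

lemma exists_grid_point_before:
  fixes s t T :: real
  assumes "0 < T" and "s + T \<le> t"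
  obtains k :: nat where "s + real (Suc k) * T \<le> t" and "t < s + real (Suc k) * T + T"
proof -
  define q where "q = (t - s) / T"
  define n where "n = nat \<lfloor>q\<rfloor>"
  have "1 \<le> q" using assms by (simp add: q_def pos_le_divide_eq)
  then have "real n = of_int \<lfloor>q\<rfloor>" by (simp add: n_def)
  then have "real n \<le> q" "q < real n + 1"
    using of_int_floor_le[of q] real_of_int_floor_add_one_gt[of q] by linarith+
  then have "s + real n * T \<le> t" "t < s + real n * T + T"
    using \<open>0 < T\<close> by (simp_all add: q_def pos_le_divide_eq pos_divide_less_eq algebra_simps)
  moreover have "0 < n" using \<open>q < real n + 1\<close> \<open>1 \<le> q\<close> by simp
  ultimately show ?thesis using that[of "n - 1"] by simp
qed

lemma invariant_along_grid:
  fixes X :: "real \<Rightarrow> 'a"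
  assumes step: "\<And>a. X a \<in> K \<Longrightarrow> a + T < c \<Longrightarrow> Q (X (a + T))"
    and Q_K: "\<And>x. Q x \<Longrightarrow> x \<in> K"
    and "X s \<in> K" and "0 < T" and "s + real (Suc k) * T < c"
  shows "Q (X (s + real (Suc k) * T))"
  using assms(5)
proof (induction k)
  case 0
  then show ?case using step[OF \<open>X s \<in> K\<close>] by simp
next
  case (Suc k)
  then have "s + real (Suc k) * T < c" using \<open>0 < T\<close> by (simp add: distrib_right)
  then have "X (s + real (Suc k) * T) \<in> K" using Suc.IH Q_K by blast
  from step[OF this] Suc.prems show ?case by (simp add: algebra_simps)
qed

locale parameter_shift_attractor = lipschitz_flow "\<lambda>x. f (x, lm)" \<phi>
  for f :: "'a::euclidean_space \<times> real \<Rightarrow> 'a" and lm \<phi> +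
  fixes A :: "'a set" and \<Lambda> :: "real \<Rightarrow> real" and r :: real and \<Phi> :: "real \<Rightarrow> real \<Rightarrow> 'a \<Rightarrow> 'a"
  assumes continuous_f: "continuous_on UNIV f"
    and asymptotically_stable: "asymptotically_stable \<phi> A"
    and shift_past_limit: "(\<Lambda> \<longlongrightarrow> lm) at_bot"
    and rate_pos: "0 < r"
    and cocycle: "is_solution_cocycle (\<lambda>t x. f (x, \<Lambda> (r * t))) \<Phi>"
begin

definition solution :: "(real \<Rightarrow> 'a) \<Rightarrow> bool" where
  "solution X \<longleftrightarrow> (\<forall>v. (X has_vector_derivative f (X v, \<Lambda> (r * v))) (at v))"

lemma cocycle_solution: "solution (\<lambda>t. \<Phi> t s x)" and cocycle_initial: "\<Phi> s s x = x"
  using cocycle unfolding is_solution_cocycle_def solution_def by blast+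

lemma attractor_compact: "compact A" and attractor_nonempty: "A \<noteq> {}"
  using asymptotically_stable unfolding asymptotically_stable_def by blast+

lemma attractor_stable:
  assumes "0 < \<epsilon>"
  obtains \<delta> where "0 < \<delta>" and "\<And>t y. 0 \<le> t \<Longrightarrow> infdist y A < \<delta> \<Longrightarrow> infdist (\<phi> t y) A < \<epsilon>"
proof -
  have "\<forall>\<epsilon>>0. \<exists>\<delta>>0. \<forall>t>0. \<forall>y\<in>nbhd \<delta> A. semidist {\<phi> t y} A < \<epsilon>"
    using asymptotically_stable unfolding asymptotically_stable_def by blast
  then have "\<forall>\<epsilon>>0. \<exists>\<delta>>0. \<forall>t>0. \<forall>y. infdist y A < \<delta> \<longrightarrow> infdist (\<phi> t y) A < \<epsilon>"
    by (simp add: nbhd_eq_infdist semidist_singleton)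
  then obtain \<delta> where "0 < \<delta>" and \<delta>: "\<forall>t>0. \<forall>y. infdist y A < \<delta> \<longrightarrow> infdist (\<phi> t y) A < \<epsilon>"
    using assms by blast
  show ?thesis
  proof (rule that[of "min \<delta> \<epsilon>"])
    show "0 < min \<delta> \<epsilon>" using \<open>0 < \<delta>\<close> assms by simp
    fix t :: real and y assume "0 \<le> t" and y: "infdist y A < min \<delta> \<epsilon>"
    show "infdist (\<phi> t y) A < \<epsilon>"
    proof (cases "t = 0")
      case True
      then show ?thesis using y by simp
    next
      case False
      then show ?thesis using \<delta> \<open>0 \<le> t\<close> y by simp
    qed
  qed
qed

lemma attractor_basin:
  obtains \<eta> where "0 < \<eta>" and "\<And>y. infdist y A < \<eta> \<Longrightarrow> ((\<lambda>t. infdist (\<phi> t y) A) \<longlongrightarrow> 0) at_top"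
proof -
  have "\<exists>\<eta>>0. \<forall>y\<in>nbhd \<eta> A. ((\<lambda>t. semidist {\<phi> t y} A) \<longlongrightarrow> 0) at_top"
    using asymptotically_stable unfolding asymptotically_stable_def by blast
  then have "\<exists>\<eta>>0. \<forall>y. infdist y A < \<eta> \<longrightarrow> ((\<lambda>t. infdist (\<phi> t y) A) \<longlongrightarrow> 0) at_top"
    by (simp add: nbhd_eq_infdist semidist_singleton)
  then show ?thesis using that by blast
qed

text \<open>Pointwise attraction plus stability makes attraction uniform on compact sets: a point near
  y enters the \<delta>-neighbourhood of A together with y and then stays close to A.\<close>
lemma uniform_attraction_on_compact:
  assumes "compact K" and attracted: "\<And>y. y \<in> K \<Longrightarrow> ((\<lambda>t. infdist (\<phi> t y) A) \<longlongrightarrow> 0) at_top"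
    and "0 < \<epsilon>"
  shows "\<exists>T. \<forall>z\<in>K. \<forall>t\<ge>T. infdist (\<phi> t z) A < \<epsilon>"
proof (rule compact_uniform_threshold[OF \<open>compact K\<close>])
  fix y assume "y \<in> K"
  obtain \<delta> where "0 < \<delta>" and \<delta>: "\<And>t y. 0 \<le> t \<Longrightarrow> infdist y A < \<delta> \<Longrightarrow> infdist (\<phi> t y) A < \<epsilon>"
    using attractor_stable[OF \<open>0 < \<epsilon>\<close>] by blast
  have "\<forall>\<^sub>F t in at_top. infdist (\<phi> t y) A < \<delta> / 2"
    using \<open>0 < \<delta>\<close> by (intro order_tendstoD(2)[OF attracted[OF \<open>y \<in> K\<close>]]) simp
  then obtain N where N: "\<And>t. N \<le> t \<Longrightarrow> infdist (\<phi> t y) A < \<delta> / 2"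
    unfolding eventually_at_top_linorder by blast
  define T where "T = max N 0"
  have "0 \<le> T" and T: "infdist (\<phi> T y) A < \<delta> / 2"
    using N by (simp_all add: T_def)
  obtain \<nu> where "0 < \<nu>" and \<nu>: "\<And>z. norm (z - y) < \<nu> \<Longrightarrow> norm (\<phi> T z - \<phi> T y) < \<delta> / 2"
    using flow_continuous_dependence[of "\<delta> / 2" y T] \<open>0 < \<delta>\<close> \<open>0 \<le> T\<close> by auto
  have "infdist (\<phi> t z) A < \<epsilon>" if "dist z y < \<nu>" "T \<le> t" for z t
  proof -
    have "infdist (\<phi> T z) A < \<delta>"
      using \<nu>[of z] that(1) T infdist_triangle[of "\<phi> T z" A "\<phi> T y"] by (simp add: dist_norm)
    then have "infdist (\<phi> (t - T) (\<phi> T z)) A < \<epsilon>" using \<delta> that(2) by simp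
    then show ?thesis using flow_semigroup[of "t - T" T z] that(2) by simp
  qed
  with \<open>0 < \<nu>\<close> show "\<exists>\<nu>>0. \<exists>c. \<forall>z\<in>K. dist z y < \<nu> \<longrightarrow> (\<forall>t\<ge>c. infdist (\<phi> t z) A < \<epsilon>)"
    by blast
qed (use order_trans in blast)

text \<open>Far in the past \<Lambda>(r t) is close to lm, so by uniform continuity of f the field of the
  shifted system is a small perturbation of the frozen one on the ball where the flow lines
  from K stay, and flow_tracking applies.\<close>
lemma solution_tracks_flow_in_past:
  assumes "compact K" and "0 < \<gamma>"
  obtains \<tau> where "0 < \<tau>"
    and "\<And>X a u. solution X \<Longrightarrow> X a \<in> K \<Longrightarrow> u \<in> {a..a+T} \<Longrightarrow> u < - \<tau> \<Longrightarrow>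
      norm (X u - \<phi> (u - a) (X a)) < \<gamma>"
proof -
  obtain R where R: "\<forall>z\<in>K. \<forall>t\<in>{0..T}. norm (\<phi> t z) \<le> R"
    using flow_bounded_on_compact[OF assms(1)] by blast
  obtain L where L: "L-lipschitz_on (cball 0 (R + 1)) (\<lambda>x. f (x, lm))"
    using lipschitz_on_cball by blast
  have "0 \<le> L" using L by (rule lipschitz_on_nonneg)
  define \<nu> where "\<nu> = min \<gamma> 1 * exp (- ((L + 2) * T))"
  have "0 < \<nu>" using \<open>0 < \<gamma>\<close> by (simp add: \<nu>_def)
  define S where "S = cball (0::'a) (R + 1) \<times> cball lm 1"
  have "uniformly_continuous_on S f"
    unfolding S_def
    by (intro compact_uniformly_continuous continuous_on_subset[OF continuous_f] compact_Times) auto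
  then obtain \<theta> where "0 < \<theta>"
    and \<theta>: "\<And>z z'. z \<in> S \<Longrightarrow> z' \<in> S \<Longrightarrow> dist z' z < \<theta> \<Longrightarrow> dist (f z') (f z) < \<nu>"
    unfolding uniformly_continuous_on_def using \<open>0 < \<nu>\<close> by metis
  have "\<forall>\<^sub>F w in at_bot. dist (\<Lambda> w) lm < min \<theta> 1"
    using \<open>0 < \<theta>\<close> by (intro tendstoD[OF shift_past_limit]) simp
  then obtain M where M: "\<And>w. w \<le> M \<Longrightarrow> dist (\<Lambda> w) lm < min \<theta> 1"
    unfolding eventually_at_bot_linorder by blast
  define \<tau> where "\<tau> = max 1 (- M / r)"
  have close: "norm (f (p, \<Lambda> (r * v)) - f (p, lm)) \<le> \<nu>" if "v < - \<tau>" "p \<in> cball 0 (R + 1)" for v p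
  proof -
    have "v < M / r" using that(1) by (simp add: \<tau>_def)
    then have "dist (\<Lambda> (r * v)) lm < min \<theta> 1"
      using rate_pos by (intro M) (simp add: pos_less_divide_eq mult.commute)
    then have "(p, \<Lambda> (r * v)) \<in> S" "(p, lm) \<in> S" "dist (p, \<Lambda> (r * v)) (p, lm) < \<theta>"
      using that(2) by (auto simp: S_def dist_Pair_Pair dist_commute)
    then show ?thesis using \<theta> by (simp add: dist_norm less_imp_le)
  qed
  show ?thesis
  proof (rule that)
    show "0 < \<tau>" by (simp add: \<tau>_def)
    fix X a u
    assume X: "solution X" and "X a \<in> K" and u: "u \<in> {a..a+T}" "u < - \<tau>"
    have R': "\<forall>t\<in>{0..u - a}. norm (\<phi> t (X a)) \<le> R" using R \<open>X a \<in> K\<close> u by auto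
    have "exp (- ((L + 2) * T)) \<le> exp (- ((L + 2) * (u - a)))"
      using u \<open>0 \<le> L\<close> by (simp add: mult_left_mono)
    then have "\<nu> \<le> min \<gamma> 1 * exp (- ((L + 2) * (u - a)))"
      unfolding \<nu>_def using \<open>0 < \<gamma>\<close> by (intro mult_left_mono) auto
    moreover have "\<forall>v\<in>{a..a + (u - a)}. \<forall>p\<in>cball 0 (R + 1). norm (f (p, \<Lambda> (r * v)) - f (p, lm)) \<le> \<nu>"
      using close u by auto
    ultimately show "norm (X u - \<phi> (u - a) (X a)) < \<gamma>"
      using flow_tracking[OF L R', of X "\<lambda>v p. f (p, \<Lambda> (r * v))" a \<nu> \<gamma> u] X u \<open>0 < \<nu>\<close>
      by (simp add: solution_def)
  qed
qed

lemma attraction_step: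
  assumes "compact K"
    and attracted: "\<And>y. y \<in> K \<Longrightarrow> ((\<lambda>t. infdist (\<phi> t y) A) \<longlongrightarrow> 0) at_top"
    and "0 < \<epsilon>"
  obtains \<delta> T \<tau> where "\<delta> \<le> \<epsilon>" and "0 < T" and "0 < \<tau>"
    and "\<And>X a. solution X \<Longrightarrow> X a \<in> K \<Longrightarrow> a + T < - \<tau> \<Longrightarrow> infdist (X (a + T)) A < \<delta>"
    and "\<And>X a u. solution X \<Longrightarrow> X a \<in> K \<Longrightarrow> infdist (X a) A < \<delta> \<Longrightarrow> u \<in> {a..a+T} \<Longrightarrow>
      u < - \<tau> \<Longrightarrow> infdist (X u) A < 2 * \<epsilon>"
proof -
  obtain \<delta>\<^sub>0 where "0 < \<delta>\<^sub>0"
    and stable: "\<And>t y. 0 \<le> t \<Longrightarrow> infdist y A < \<delta>\<^sub>0 \<Longrightarrow> infdist (\<phi> t y) A < \<epsilon>"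
    using attractor_stable[OF \<open>0 < \<epsilon>\<close>] by blast
  define \<delta> where "\<delta> = min \<delta>\<^sub>0 \<epsilon>"
  have "0 < \<delta>" "\<delta> \<le> \<epsilon>" "\<delta> \<le> \<delta>\<^sub>0" using \<open>0 < \<delta>\<^sub>0\<close> \<open>0 < \<epsilon>\<close> by (auto simp: \<delta>_def)
  obtain T\<^sub>0 where T\<^sub>0: "\<forall>z\<in>K. \<forall>t\<ge>T\<^sub>0. infdist (\<phi> t z) A < \<delta> / 2"
    using uniform_attraction_on_compact[OF assms(1) attracted, of "\<delta> / 2"] \<open>0 < \<delta>\<close> by auto
  define T where "T = max T\<^sub>0 1"
  have "0 < T" by (simp add: T_def)
  obtain \<tau> where "0 < \<tau>" and track: "\<And>X a u. solution X \<Longrightarrow> X a \<in> K \<Longrightarrow> u \<in> {a..a+T} \<Longrightarrow>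
      u < - \<tau> \<Longrightarrow> norm (X u - \<phi> (u - a) (X a)) < \<delta> / 2"
    using solution_tracks_flow_in_past[OF assms(1), of "\<delta> / 2" T] \<open>0 < \<delta>\<close> by auto
  show ?thesis
  proof (rule that[OF \<open>\<delta> \<le> \<epsilon>\<close> \<open>0 < T\<close> \<open>0 < \<tau>\<close>])
    fix X a assume "solution X" "X a \<in> K" "a + T < - \<tau>"
    then have "norm (X (a + T) - \<phi> T (X a)) < \<delta> / 2"
      using track[of X a "a + T"] \<open>0 < T\<close> by simp
    moreover have "infdist (\<phi> T (X a)) A < \<delta> / 2"
      using T\<^sub>0 \<open>X a \<in> K\<close> by (simp add: T_def)
    ultimately show "infdist (X (a + T)) A < \<delta>"
      using infdist_triangle[of "X (a + T)" A "\<phi> T (X a)"] by (simp add: dist_norm)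
  next
    fix X a u
    assume "solution X" "X a \<in> K" "infdist (X a) A < \<delta>" "u \<in> {a..a+T}" "u < - \<tau>"
    then have "norm (X u - \<phi> (u - a) (X a)) < \<delta> / 2"
      using track[of X a u] by blast
    moreover have "infdist (\<phi> (u - a) (X a)) A < \<epsilon>"
      using stable \<open>\<delta> \<le> \<delta>\<^sub>0\<close> \<open>infdist (X a) A < \<delta>\<close> \<open>u \<in> {a..a+T}\<close> by simp
    ultimately show "infdist (X u) A < 2 * \<epsilon>"
      using infdist_triangle[of "X u" A "\<phi> (u - a) (X a)"] \<open>\<delta> \<le> \<epsilon>\<close> \<open>0 < \<epsilon>\<close>
      by (simp add: dist_norm)
  qed
qed

lemma pullback_attraction_from_basin:
  assumes attracted: "\<And>y. infdist y A \<le> \<kappa> \<Longrightarrow> ((\<lambda>t. infdist (\<phi> t y) A) \<longlongrightarrow> 0) at_top"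
    and "0 < \<kappa>" and "\<eta> \<le> \<kappa>" and "0 < \<delta>"
  shows "\<exists>\<tau>>0. \<exists>\<tau>'>0. \<forall>t s. s < t - \<tau>' \<and> t < - \<tau> \<longrightarrow> \<Phi> t s ` nbhd \<eta> A \<subseteq> nbhd \<delta> A"
proof -
  define K where "K = {x. infdist x A \<le> \<kappa>}"
  have "compact K"
    unfolding K_def using attractor_compact attractor_nonempty by (rule compact_infdist_le)
  define \<epsilon> where "\<epsilon> = min \<delta> \<kappa> / 2"
  have "0 < \<epsilon>" using assms by (simp add: \<epsilon>_def)
  obtain \<delta>' T \<tau> where "\<delta>' \<le> \<epsilon>" "0 < T" "0 < \<tau>"
    and enter: "\<And>X a. solution X \<Longrightarrow> X a \<in> K \<Longrightarrow> a + T < - \<tau> \<Longrightarrow> infdist (X (a + T)) A < \<delta>'"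
    and stay: "\<And>X a u. solution X \<Longrightarrow> X a \<in> K \<Longrightarrow> infdist (X a) A < \<delta>' \<Longrightarrow> u \<in> {a..a+T} \<Longrightarrow>
      u < - \<tau> \<Longrightarrow> infdist (X u) A < 2 * \<epsilon>"
    using attraction_step[OF \<open>compact K\<close> attracted \<open>0 < \<epsilon>\<close>] by (auto simp: K_def)
  have in_K: "x \<in> K" if "infdist x A < \<delta>'" for x
    using that \<open>\<delta>' \<le> \<epsilon>\<close> \<open>0 < \<kappa>\<close> by (simp add: K_def \<epsilon>_def)
  have "infdist (\<Phi> t s x) A < \<delta>" if "s < t - T" "t < - \<tau>" "infdist x A < \<eta>" for t s x
  proof -
    define X where "X v = \<Phi> v s x" for v
    have "solution X" unfolding X_def by (rule cocycle_solution)
    have "X s \<in> K" using \<open>infdist x A < \<eta>\<close> \<open>\<eta> \<le> \<kappa>\<close> by (simp add: X_def K_def cocycle_initial)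
    obtain k where k: "s + real (Suc k) * T \<le> t" "t < s + real (Suc k) * T + T"
      using exists_grid_point_before[OF \<open>0 < T\<close>, of s t] \<open>s < t - T\<close> by auto
    have "s + real (Suc k) * T < - \<tau>" using k(1) \<open>t < - \<tau>\<close> by linarith
    have "infdist (X (s + real (Suc k) * T)) A < \<delta>'"
    proof (rule invariant_along_grid[where Q = "\<lambda>y. infdist y A < \<delta>'"])
      show "infdist (X (a + T)) A < \<delta>'" if "X a \<in> K" "a + T < - \<tau>" for a
        using enter[OF \<open>solution X\<close> that] .
    qed (use in_K \<open>X s \<in> K\<close> \<open>0 < T\<close> \<open>s + real (Suc k) * T < - \<tau>\<close> in auto)
    then have "infdist (X t) A < 2 * \<epsilon>"
      using stay[OF \<open>solution X\<close> in_K, of "s + real (Suc k) * T" t] k \<open>t < - \<tau>\<close> by simp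
    then show ?thesis by (simp add: X_def \<epsilon>_def)
  qed
  then have "\<forall>t s. s < t - T \<and> t < - \<tau> \<longrightarrow> \<Phi> t s ` nbhd \<eta> A \<subseteq> nbhd \<delta> A"
    by (auto simp: nbhd_eq_infdist)
  then show ?thesis using \<open>0 < T\<close> \<open>0 < \<tau>\<close> by blast
qed

lemma pullback_attraction:
  "\<exists>\<eta>\<^sub>0>0. \<forall>\<eta>\<in>{0<..\<eta>\<^sub>0}. \<forall>\<delta>>0. \<exists>\<tau>>0. \<exists>\<tau>'>0.
     \<forall>t s. s < t - \<tau>' \<and> t < - \<tau> \<longrightarrow> \<Phi> t s ` nbhd \<eta> A \<subseteq> nbhd \<delta> A"
proof -
  obtain \<eta>\<^sub>b where "0 < \<eta>\<^sub>b"
    and basin: "\<And>y. infdist y A < \<eta>\<^sub>b \<Longrightarrow> ((\<lambda>t. infdist (\<phi> t y) A) \<longlongrightarrow> 0) at_top"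
    using attractor_basin by blast
  \<comment> \<open>Halving the basin radius puts the closed neighbourhood inside the open basin.\<close>
  have "((\<lambda>t. infdist (\<phi> t y) A) \<longlongrightarrow> 0) at_top" if "infdist y A \<le> \<eta>\<^sub>b / 2" for y
    using basin that \<open>0 < \<eta>\<^sub>b\<close> by simp
  then show ?thesis
    using pullback_attraction_from_basin[of "\<eta>\<^sub>b / 2"] \<open>0 < \<eta>\<^sub>b\<close>
    by (intro exI[of _ "\<eta>\<^sub>b / 2"]) auto
qed

end

theorem lemma2p3:
  fixes f :: "'a::euclidean_space \<times> real \<Rightarrow> 'a"
    and \<Lambda> :: "real \<Rightarrow> real"
    and lm lp r :: real
    and \<Phi> :: "real \<Rightarrow> real \<Rightarrow> 'a \<Rightarrow> 'a"
    and \<phi> :: "real \<Rightarrow> 'a \<Rightarrow> 'a"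
    and A :: "'a set"
  assumes "C1_map f"
    and "lm < lp"
    and "parameter_shift \<Lambda> lm lp"
    and "r > 0"
    and "is_solution_cocycle (\<lambda>t x. f (x, \<Lambda> (r * t))) \<Phi>"
    and "is_flow (\<lambda>x. f (x, lm)) \<phi>"
    and "asymptotically_stable \<phi> A"
  shows "\<exists>\<eta>t>0. \<forall>\<eta>\<in>{0<..\<eta>t}. \<forall>\<delta>>0. \<exists>\<tau>>0. \<exists>\<tau>t>0.
           \<forall>t s. s < t - \<tau>t \<and> t < - \<tau> \<longrightarrow> \<Phi> t s ` nbhd \<eta> A \<subseteq> nbhd \<delta> A"
proof -
  \<comment> \<open>Only the limit of \<Lambda> at -\<infinity> enters.\<close>
  interpret parameter_shift_attractor f lm \<phi> A \<Lambda> r \<Phi>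
  proof
    show "is_flow (\<lambda>x. f (x, lm)) \<phi>" by fact
    show "\<exists>L. L-lipschitz_on (cball 0 R) (\<lambda>x. f (x, lm))" for R
      using \<open>C1_map f\<close> by (rule C1_map_slice_lipschitz_on_cball)
    show "continuous_on UNIV f"
      using \<open>C1_map f\<close> by (rule C1_map_imp_continuous)
    show "(\<Lambda> \<longlongrightarrow> lm) at_bot"
      using \<open>parameter_shift \<Lambda> lm lp\<close> by (simp add: parameter_shift_def)
  qed fact+
  show ?thesis by (rule pullback_attraction)
qed

end
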